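(* Let $\mathfrak{d}=\bigoplus_{n\ge0}\mathfrak{d}_n:\mathsf{cf}(\mathrm{UT}_\bullet)\to\mathsf{cf}(\mathrm{UT}_\bullet)$ with $\mathfrak{d}_n(\psi)=\psi\circ\dagger$. Then $\mathfrak{d}$ is a graded antiautomorphism of the Hopf algebra $\mathsf{cf}(\mathrm{UT}_\bullet)$, i.e. $\mu\circ(\mathfrak{d}\otimes\mathfrak{d})=\mathfrak{d}\circ\mu\circ\beta$ and $\Delta\circ\mathfrak{d}=\beta\circ(\mathfrak{d}\otimes\mathfrak{d})\circ\Delta$, where $\beta$ swaps the two tensor factors. Moreover $\mathrm{Ind}^{\mathrm{GL}}_{\mathrm{UT}}\circ\mathfrak{d}=\mathrm{Ind}^{\mathrm{GL}}_{\mathrm{UT}}$, where $\mathrm{Ind}^{\mathrm{GL}}_{\mathrm{UT}}=\bigoplus_n\mathrm{Ind}^{\mathrm{GL}_n}_{\mathrm{UT}_n}$.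
   Context: Fix the finite field $\mathbb{F}_q$; $[n]=\{1,\dots,n\}$. $\mathrm{GL}_n$ is the group of invertible $n\times n$ matrices over $\mathbb{F}_q$, $\mathrm{UT}_n$ the unipotent upper triangular subgroup, $\mathsf{cf}(G)$ complex class functions, $\mathrm{Ind}$ induction. Let $\tilde w(i)=n+1-i$ and for an $n\times n$ matrix $x$ define $x^\dagger$ by $(x^\dagger)_{r,s}=x_{\tilde w(s),\tilde w(r)}$; $\dagger$ is an anti-automorphism of $\mathrm{GL}_n$ preserving $\mathrm{UT}_n$. Hopf algebra $\mathsf{cf}(\mathrm{UT}_\bullet)=\bigoplus_n\mathsf{cf}(\mathrm{UT}_n)$: for $I\subseteq[n]$, $I^c=[n]\setminus I$, let $\mathrm{UL}_I=\{g\in\mathrm{UT}_n:(g-1_n)_{i,j}\ne0\text{ only if }(i,j)\in I\times I\cup I^c\times I^c\}$, $\mathrm{UR}_I=\{g\in\mathrm{UT}_n:(g-1_n)_{i,j}\ne0\text{ only if }(i,j)\in I\times I^c\}$, $\mathrm{UP}_I=\{g\in\mathrm{UT}_n:(g-1_n)_{i,j}=0\text{ for }(i,j)\in I^c\times I\}=\mathrm{UL}_I\ltimes\mathrm{UR}_I$ (and $\mathrm{UP}_{[i]}=\mathrm{UT}_n$). With $\mathrm{cano}_I:I\to[|I|]$ order-preserving, $\mathrm{UL}_I\cong\mathrm{UT}_{|I|}\times\mathrm{UT}_{|I^c|}$ by relabelling the $I\times I$ and $I^c\times I^c$ blocks via $\mathrm{cano}_I,\mathrm{cano}_{I^c}$,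 inducing $\mathrm{st}_{(I,I^c)}:\mathsf{cf}(\mathrm{UL}_I)\to\mathsf{cf}(\mathrm{UT}_{|I|})\otimes\mathsf{cf}(\mathrm{UT}_{|I^c|})$. Product $\mu=\bigoplus_{n\ge i\ge0}\mathrm{Inf}^{\mathrm{UT}_n}_{\mathrm{UL}_{[i]}}\circ\mathrm{st}^{-1}_{([i],[i]^c)}$ where $\mathrm{Inf}\psi(lr)=\psi(l)$; coproduct $\Delta=\bigoplus_n\sum_{I\subseteq[n]}\mathrm{st}_{(I,I^c)}\circ\mathrm{Def}^{\mathrm{UP}_I}_{\mathrm{UL}_I}\circ\mathrm{Res}^{\mathrm{UT}_n}_{\mathrm{UP}_I}$ where $\mathrm{Def}^{\mathrm{UP}_I}_{\mathrm{UL}_I}\psi(g)=\frac1{|\mathrm{UR}_I|}\sum_{x\in\mathrm{UR}_I}\psi(gx)$. *)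

theory Defs
  imports Complex_Main "Jordan_Normal_Form.Matrix"
begin

(* Finite field F_q: a type 'a :: {finite, field}.  n x n matrices: JNF matrices in
   carrier_mat n n, indices 0..n-1 (0-based; the paper's index i corresponds to i-1). *)

definition UT :: "nat \<Rightarrow> ('a::{finite,field}) mat set" where
  "UT n = {A \<in> carrier_mat n n. (\<forall>i<n. A $$ (i,i) = 1) \<and>
                                (\<forall>i<n. \<forall>j<n. j < i \<longrightarrow> A $$ (i,j) = 0)}"

definition GL :: "nat \<Rightarrow> ('a::{finite,field}) mat set" where
  "GL n = {A \<in> carrier_mat n n. invertible_mat A}"

definition mat_inv :: "nat \<Rightarrow> ('a::{finite,field}) mat \<Rightarrow> 'a mat" where
  "mat_inv n A = (THE B. B \<in> carrier_mat n n \<and> A * B = 1\<^sub>m n)"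

(* complex class functions on UT_n, viewed as functions on all matrices vanishing off UT_n *)
definition cf :: "nat \<Rightarrow> (('a::{finite,field}) mat \<Rightarrow> complex) set" where
  "cf n = {\<psi>. (\<forall>A. A \<notin> UT n \<longrightarrow> \<psi> A = 0) \<and>
              (\<forall>g\<in>UT n. \<forall>h\<in>UT n. \<psi> (h * g * mat_inv n h) = \<psi> g)}"

(* cf(UT_a) \<otimes> cf(UT_b) identified with class functions of UT_a x UT_b *)
definition cf2 :: "nat \<Rightarrow> nat \<Rightarrow> (('a::{finite,field}) mat \<times> 'a mat \<Rightarrow> complex) set" where
  "cf2 a b = {\<Phi>. (\<forall>x y. (x \<notin> UT a \<or> y \<notin> UT b) \<longrightarrow> \<Phi> (x,y) = 0) \<and>
              (\<forall>x\<in>UT a. \<forall>y\<in>UT b. \<forall>h\<in>UT a. \<forall>k\<in>UT b.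
                  \<Phi> (h * x * mat_inv a h, k * y * mat_inv b k) = \<Phi> (x,y))}"

definition dagger :: "nat \<Rightarrow> 'a mat \<Rightarrow> 'a mat" where
  "dagger n A = mat n n (\<lambda>(r,s). A $$ (n - 1 - s, n - 1 - r))"

definition dual :: "nat \<Rightarrow> (('a::{finite,field}) mat \<Rightarrow> complex) \<Rightarrow> ('a mat \<Rightarrow> complex)" where
  "dual n \<psi> = (\<lambda>A. if A \<in> UT n then \<psi> (dagger n A) else 0)"

definition dual2 :: "nat \<Rightarrow> nat \<Rightarrow> (('a::{finite,field}) mat \<times> 'a mat \<Rightarrow> complex)
                     \<Rightarrow> ('a mat \<times> 'a mat \<Rightarrow> complex)" where
  "dual2 a b \<Phi> = (\<lambda>(x,y). if x \<in> UT a \<and> y \<in> UT b then \<Phi> (dagger a x, dagger b y) else 0)"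

definition swapf :: "('b \<times> 'b \<Rightarrow> complex) \<Rightarrow> ('b \<times> 'b \<Rightarrow> complex)" where
  "swapf \<Phi> = (\<lambda>(x,y). \<Phi> (y,x))"

(* product mu = Inf^{UT_{a+b}}_{UL_{[a]}} o st^{-1}: Inf psi (l r) = psi(l), and the
   diagonal blocks of l r equal those of l *)
definition mu :: "nat \<Rightarrow> nat \<Rightarrow> (('a::{finite,field}) mat \<times> 'a mat \<Rightarrow> complex)
                  \<Rightarrow> ('a mat \<Rightarrow> complex)" where
  "mu a b \<Phi> = (\<lambda>g. if g \<in> UT (a + b) then
       \<Phi> (mat a a (\<lambda>(i,j). g $$ (i,j)), mat b b (\<lambda>(i,j). g $$ (a + i, a + j))) else 0)"

definition cano :: "nat set \<Rightarrow> nat \<Rightarrow> nat" where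
  "cano I i = card {k \<in> I. k < i}"

definition UL :: "nat \<Rightarrow> nat set \<Rightarrow> ('a::{finite,field}) mat set" where
  "UL n I = {g \<in> UT n. \<forall>i<n. \<forall>j<n. (g - 1\<^sub>m n) $$ (i,j) \<noteq> 0 \<longrightarrow>
               (i \<in> I \<and> j \<in> I) \<or> (i \<notin> I \<and> j \<notin> I)}"

definition UR :: "nat \<Rightarrow> nat set \<Rightarrow> ('a::{finite,field}) mat set" where
  "UR n I = {g \<in> UT n. \<forall>i<n. \<forall>j<n. (g - 1\<^sub>m n) $$ (i,j) \<noteq> 0 \<longrightarrow> i \<in> I \<and> j \<notin> I}"

definition st :: "nat \<Rightarrow> nat set \<Rightarrow> 'a mat \<Rightarrow> 'a mat \<times> 'a mat" where
  "st n I g = (let J = {0..<n} - I in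
     (mat (card I) (card I) (\<lambda>(i,j). g $$ (inv_into I (cano I) i, inv_into I (cano I) j)),
      mat (card J) (card J) (\<lambda>(i,j). g $$ (inv_into J (cano J) i, inv_into J (cano J) j))))"

(* Def^{UP_I}_{UL_I} o Res^{UT_n}_{UP_I}, as a function on UL_I *)
definition DefRes :: "nat \<Rightarrow> nat set \<Rightarrow> (('a::{finite,field}) mat \<Rightarrow> complex) \<Rightarrow> ('a mat \<Rightarrow> complex)" where
  "DefRes n I \<psi> = (\<lambda>g. (1 / of_nat (card (UR n I :: 'a mat set))) * (\<Sum>x\<in>UR n I. \<psi> (g * x)))"

(* component of the coproduct Delta(psi) in cf(UT_a) \<otimes> cf(UT_{n-a}):
   sum over I \<subseteq> [n] with |I| = a of st_{(I,I^c)} (Def o Res psi) *)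
definition coprod :: "nat \<Rightarrow> nat \<Rightarrow> (('a::{finite,field}) mat \<Rightarrow> complex)
                      \<Rightarrow> ('a mat \<times> 'a mat \<Rightarrow> complex)" where
  "coprod n a \<psi> = (\<lambda>(x,y). \<Sum>I\<in>{I. I \<subseteq> {0..<n} \<and> card I = a}.
       \<Sum>g\<in>{g \<in> UL n I. st n I g = (x,y)}. DefRes n I \<psi> g)"

definition ind :: "nat \<Rightarrow> (('a::{finite,field}) mat \<Rightarrow> complex) \<Rightarrow> ('a mat \<Rightarrow> complex)" where
  "ind n \<psi> = (\<lambda>g. if g \<in> GL n then
       (1 / of_nat (card (UT n :: 'a mat set))) * (\<Sum>x\<in>GL n. \<psi> (mat_inv n x * g * x))
     else 0)"

end

theory Submission
  imports Defs "Jordan_Normal_Form.Jordan_Normal_Form_Existence"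
begin

(* Writing J for the exchange matrix (the permutation matrix of w), x^dagger = J x^T J, so dagger
   is an involutive anti-automorphism of GL_n preserving UT_n, and psi |-> psi o dagger is an
   involution of cf(UT_n).  Since dagger reverses the order of the indices, it swaps the two
   diagonal blocks of an element of UT_(a+b), which gives the product rule.  It also maps UL_I,
   UR_I onto UL_J, UR_J and the I- and I^c-blocks onto the J^c- and J-blocks, where J = w(I^c);
   reindexing the coproduct by I |-> w(I^c), and using psi(g x) = psi(x g) for class functions
   in the deflation, gives the coproduct rule.  Finally, Ind psi (g) is a sum of psi over the
   GL_n-conjugates of g, and dagger carries these to the conjugates of g^dagger.  A unitriangular
   u is GL_n-conjugate to u^dagger = J u^T J, because u has a Jordan normal form and every Jordan
   block is conjugate to its transpose by J.  So g^dagger is conjugate to g as soon as one of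
   them has a unitriangular conjugate, and otherwise both sums vanish. *)

section \<open>The exchange matrix and the anti-involution \<open>\<dagger>\<close>\<close>

lemma mult_carrier_mat_square [simp]:
  "A \<in> carrier_mat n n \<Longrightarrow> B \<in> carrier_mat n n \<Longrightarrow> A * B \<in> carrier_mat n n"
  by simp

definition mirror :: "nat \<Rightarrow> nat \<Rightarrow> nat" where
  "mirror n k = n - 1 - k"

lemma mirror_less [simp]: "k < n \<Longrightarrow> mirror n k < n"
  by (simp add: mirror_def)

lemma mirror_mirror [simp]: "k < n \<Longrightarrow> mirror n (mirror n k) = k"
  by (simp add: mirror_def)

lemma mirror_less_mirror_iff [simp]: "j < n \<Longrightarrow> k < n \<Longrightarrow> mirror n j < mirror n k \<longleftrightarrow> k < j"
  by (auto simp: mirror_def)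

lemma inj_on_mirror: "inj_on (mirror n) {0..<n}"
  by (rule inj_onI) (auto simp: mirror_def)

definition exchange_mat :: "nat \<Rightarrow> 'a::{zero,one} mat" where
  "exchange_mat n = mat n n (\<lambda>(i,j). if i + j + 1 = n then 1 else 0)"

lemma exchange_mat_carrier [simp]: "exchange_mat n \<in> carrier_mat n n"
  by (simp add: exchange_mat_def)

lemma exchange_mat_mult_left:
  assumes "(A :: 'a::comm_ring_1 mat) \<in> carrier_mat n m"
  shows "exchange_mat n * A = mat n m (\<lambda>(i,j). A $$ (mirror n i, j))"
proof (rule eq_matI)
  fix i j assume "i < dim_row (mat n m (\<lambda>(i,j). A $$ (mirror n i, j)))"
    and "j < dim_col (mat n m (\<lambda>(i,j). A $$ (mirror n i, j)))"
  then have ij: "i < n" "j < m" by auto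
  have "(exchange_mat n * A) $$ (i,j) = (\<Sum>k\<in>{0..<n}. (if i + k + 1 = n then 1 else 0) * A $$ (k,j))"
    using assms ij by (simp add: exchange_mat_def scalar_prod_def)
  also have "\<dots> = (\<Sum>k\<in>{0..<n}. if k = mirror n i then A $$ (k,j) else 0)"
    using ij by (intro sum.cong) (auto simp: mirror_def)
  finally show "(exchange_mat n * A) $$ (i,j) = mat n m (\<lambda>(i,j). A $$ (mirror n i, j)) $$ (i,j)"
    using ij by simp
qed (use assms in \<open>auto simp: exchange_mat_def\<close>)

lemma exchange_mat_mult_right:
  assumes "(A :: 'a::comm_ring_1 mat) \<in> carrier_mat m n"
  shows "A * exchange_mat n = mat m n (\<lambda>(i,j). A $$ (i, mirror n j))"
proof (rule eq_matI)
  fix i j assume "i < dim_row (mat m n (\<lambda>(i,j). A $$ (i, mirror n j)))"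
    and "j < dim_col (mat m n (\<lambda>(i,j). A $$ (i, mirror n j)))"
  then have ij: "i < m" "j < n" by auto
  have "(A * exchange_mat n) $$ (i,j) = (\<Sum>k\<in>{0..<n}. A $$ (i,k) * (if k + j + 1 = n then 1 else 0))"
    using assms ij by (simp add: exchange_mat_def scalar_prod_def)
  also have "\<dots> = (\<Sum>k\<in>{0..<n}. if k = mirror n j then A $$ (i,k) else 0)"
    using ij by (intro sum.cong) (auto simp: mirror_def)
  finally show "(A * exchange_mat n) $$ (i,j) = mat m n (\<lambda>(i,j). A $$ (i, mirror n j)) $$ (i,j)"
    using ij by simp
qed (use assms in \<open>auto simp: exchange_mat_def\<close>)

lemma exchange_mat_conj:
  assumes "(A :: 'a::comm_ring_1 mat) \<in> carrier_mat n n"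
  shows "exchange_mat n * A * exchange_mat n = mat n n (\<lambda>(i,j). A $$ (mirror n i, mirror n j))"
  using assms by (simp add: exchange_mat_mult_left) (subst exchange_mat_mult_right[of _ n n]; auto intro!: eq_matI)

lemma exchange_mat_squared: "exchange_mat n * exchange_mat n = (1\<^sub>m n :: 'a::comm_ring_1 mat)"
  by (subst exchange_mat_mult_left[of _ n n]) (auto simp: exchange_mat_def mirror_def intro!: eq_matI)

lemma dagger_carrier [simp]: "dagger n A \<in> carrier_mat n n"
  by (simp add: dagger_def)

lemma dagger_index [simp]:
  "i < n \<Longrightarrow> j < n \<Longrightarrow> dagger n A $$ (i,j) = A $$ (mirror n j, mirror n i)"
  "dim_row (dagger n A) = n" "dim_col (dagger n A) = n"
  by (auto simp: dagger_def mirror_def)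

lemma dagger_eq_exchange_transpose:
  assumes "(A :: 'a::comm_ring_1 mat) \<in> carrier_mat n n"
  shows "dagger n A = exchange_mat n * transpose_mat A * exchange_mat n"
  using assms by (subst exchange_mat_conj) (auto intro!: eq_matI)

lemma dagger_dagger [simp]: "A \<in> carrier_mat n n \<Longrightarrow> dagger n (dagger n A) = A"
  by (auto intro!: eq_matI)

lemma dagger_one [simp]: "dagger n (1\<^sub>m n :: 'a::{zero,one} mat) = 1\<^sub>m n"
  by (auto simp: mirror_def intro!: eq_matI)

lemma dagger_mult:
  assumes A: "(A :: 'a::comm_ring_1 mat) \<in> carrier_mat n n" and B: "B \<in> carrier_mat n n"
  shows "dagger n (A * B) = dagger n B * dagger n A"
proof -
  let ?J = "exchange_mat n :: 'a mat"
  have JJ: "?J * (?J * X) = X" if "X \<in> carrier_mat n n" for X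
    using that by (simp add: assoc_mult_mat[symmetric, of _ n n _ n _ n] exchange_mat_squared)
  have "dagger n B * dagger n A = ?J * (transpose_mat B * (?J * (?J * (transpose_mat A * ?J))))"
    using A B by (simp add: dagger_eq_exchange_transpose assoc_mult_mat[of _ n n _ n _ n])
  also have "\<dots> = dagger n (A * B)"
    using A B by (simp add: JJ dagger_eq_exchange_transpose transpose_mult assoc_mult_mat[of _ n n _ n _ n])
  finally show ?thesis by simp
qed

lemma dagger_mult3:
  assumes "(A :: 'a::comm_ring_1 mat) \<in> carrier_mat n n" "B \<in> carrier_mat n n" "C \<in> carrier_mat n n"
  shows "dagger n (A * B * C) = dagger n C * dagger n B * dagger n A"
  using assms by (simp add: dagger_mult assoc_mult_mat[of _ n n _ n _ n])

section \<open>The groups \<open>GL\<^sub>n\<close> and \<open>UT\<^sub>n\<close>\<close>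

lemma finite_carrier_mat: "finite (carrier_mat n m :: 'a::finite mat set)"
proof (rule finite_subset)
  let ?F = "({0..<n} \<times> {0..<m}) \<rightarrow>\<^sub>E (UNIV :: 'a set)"
  show "carrier_mat n m \<subseteq> mat n m ` ?F"
  proof
    fix A :: "'a mat" assume "A \<in> carrier_mat n m"
    then have "A = mat n m (restrict (($$) A) ({0..<n} \<times> {0..<m}))"
      by (auto intro!: eq_matI)
    moreover have "restrict (($$) A) ({0..<n} \<times> {0..<m}) \<in> ?F" by simp
    ultimately show "A \<in> mat n m ` ?F" by (simp add: rev_image_eqI)
  qed
  show "finite (mat n m ` ?F)" by (intro finite_imageI finite_PiE) auto
qed

lemma GL_carrier: "A \<in> GL n \<Longrightarrow> A \<in> carrier_mat n n"
  by (simp add: GL_def)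

lemma mat_inv_eqI:
  assumes A: "(A :: 'a::{finite,field} mat) \<in> carrier_mat n n" and B: "B \<in> carrier_mat n n"
    and AB: "A * B = 1\<^sub>m n"
  shows "mat_inv n A = B"
  unfolding mat_inv_def
proof (rule the_equality)
  fix C assume C: "C \<in> carrier_mat n n \<and> A * C = 1\<^sub>m n"
  have "C = (B * A) * C"
    using C mat_mult_left_right_inverse[OF A B AB] by (simp add: left_mult_one_mat[of _ n n])
  also have "\<dots> = B" using A B C by (simp add: assoc_mult_mat[of _ n n _ n _ n])
  finally show "C = B" .
qed (use B AB in auto)

lemma GL_I:
  assumes A: "(A :: 'a::{finite,field} mat) \<in> carrier_mat n n" and B: "B \<in> carrier_mat n n"
    and AB: "A * B = 1\<^sub>m n"
  shows "A \<in> GL n"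
  using A B AB mat_mult_left_right_inverse[OF A B AB]
  unfolding GL_def invertible_mat_def inverts_mat_def square_mat.simps by auto

lemma GL_mat_inv:
  assumes "(A :: 'a::{finite,field} mat) \<in> GL n"
  shows "mat_inv n A \<in> carrier_mat n n" "A * mat_inv n A = 1\<^sub>m n" "mat_inv n A * A = 1\<^sub>m n"
proof -
  have A: "A \<in> carrier_mat n n" using assms by (rule GL_carrier)
  obtain B where AB: "A * B = 1\<^sub>m n" and BA: "B * A = 1\<^sub>m (dim_row B)"
    using assms unfolding GL_def invertible_mat_def inverts_mat_def by auto
  have B: "B \<in> carrier_mat n n"
    using A arg_cong[OF AB, of dim_col] arg_cong[OF BA, of dim_col] by auto
  show "mat_inv n A \<in> carrier_mat n n" "A * mat_inv n A = 1\<^sub>m n" "mat_inv n A * A = 1\<^sub>m n"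
    using mat_inv_eqI[OF A B AB] B AB mat_mult_left_right_inverse[OF A B AB] by auto
qed

lemma GL_mat_inv_closed: "(A :: 'a::{finite,field} mat) \<in> GL n \<Longrightarrow> mat_inv n A \<in> GL n"
  using GL_I[OF GL_mat_inv(1) GL_carrier GL_mat_inv(3)] .

lemma mat_inv_mat_inv [simp]: "(A :: 'a::{finite,field} mat) \<in> GL n \<Longrightarrow> mat_inv n (mat_inv n A) = A"
  using mat_inv_eqI[OF GL_mat_inv(1) GL_carrier GL_mat_inv(3)] .

lemma GL_mult_closed:
  assumes A: "(A :: 'a::{finite,field} mat) \<in> GL n" and B: "B \<in> GL n"
  shows "A * B \<in> GL n" and "mat_inv n (A * B) = mat_inv n B * mat_inv n A"
proof -
  note Ac = GL_carrier[OF A] and Bc = GL_carrier[OF B]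
  note A' = GL_mat_inv[OF A] and B' = GL_mat_inv[OF B]
  have "A * B * (mat_inv n B * mat_inv n A) = A * ((B * mat_inv n B) * mat_inv n A)"
    using Ac Bc A'(1) B'(1) by (simp add: assoc_mult_mat[of _ n n _ n _ n])
  also have "\<dots> = 1\<^sub>m n"
    using A' B' by (simp add: left_mult_one_mat[of _ n n] del: assoc_mult_mat)
  finally have inv: "A * B * (mat_inv n B * mat_inv n A) = 1\<^sub>m n" .
  show "A * B \<in> GL n" "mat_inv n (A * B) = mat_inv n B * mat_inv n A"
    using GL_I[OF _ _ inv] mat_inv_eqI[OF _ _ inv] Ac Bc A' B' by auto
qed

lemma GL_dagger:
  assumes "(A :: 'a::{finite,field} mat) \<in> GL n"
  shows "dagger n A \<in> GL n" "mat_inv n (dagger n A) = dagger n (mat_inv n A)"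
proof -
  have "dagger n A * dagger n (mat_inv n A) = 1\<^sub>m n"
    using assms GL_mat_inv[OF assms] dagger_mult[of "mat_inv n A" n A] by (simp add: GL_carrier)
  then show "dagger n A \<in> GL n" "mat_inv n (dagger n A) = dagger n (mat_inv n A)"
    by (rule GL_I[OF dagger_carrier dagger_carrier], rule mat_inv_eqI[OF dagger_carrier dagger_carrier])
qed

lemma dagger_conj:
  assumes h: "(h :: 'a::{finite,field} mat) \<in> GL n" and g: "g \<in> carrier_mat n n"
  shows "dagger n (h * g * mat_inv n h)
    = dagger n (mat_inv n h) * dagger n g * mat_inv n (dagger n (mat_inv n h))"
  using g GL_carrier[OF h] GL_mat_inv[OF h] GL_dagger[OF GL_mat_inv_closed[OF h]] h
  by (simp add: dagger_mult3 del: assoc_mult_mat)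

lemma UT_carrier: "A \<in> UT n \<Longrightarrow> A \<in> carrier_mat n n"
  by (simp add: UT_def)

lemma finite_UT: "finite (UT n :: 'a::{finite,field} mat set)"
  by (rule finite_subset[OF _ finite_carrier_mat[of n n]]) (auto simp: UT_def)

lemma one_UT [simp]: "1\<^sub>m n \<in> UT n"
  by (auto simp: UT_def)

lemma UT_dagger: "A \<in> UT n \<Longrightarrow> dagger n A \<in> UT n"
  by (auto simp: UT_def)

lemma UT_dagger_iff: "A \<in> carrier_mat n n \<Longrightarrow> dagger n A \<in> UT n \<longleftrightarrow> A \<in> UT n"
  using UT_dagger[of "dagger n A" n] UT_dagger[of A n] by auto

lemma UT_mult_closed:
  assumes A: "A \<in> UT n" and B: "B \<in> UT n"
  shows "A * B \<in> UT n"
proof -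
  have Ac: "A \<in> carrier_mat n n" and Bc: "B \<in> carrier_mat n n"
    and Ad: "\<And>i. i < n \<Longrightarrow> A $$ (i,i) = 1" and Al: "\<And>i j. i < n \<Longrightarrow> j < i \<Longrightarrow> A $$ (i,j) = 0"
    and Bd: "\<And>i. i < n \<Longrightarrow> B $$ (i,i) = 1" and Bl: "\<And>i j. i < n \<Longrightarrow> j < i \<Longrightarrow> B $$ (i,j) = 0"
    using A B by (auto simp: UT_def)
  have entry: "(A * B) $$ (i,j) = (\<Sum>k\<in>{0..<n}. A $$ (i,k) * B $$ (k,j))" if "i < n" "j < n" for i j
    using Ac Bc that by (simp add: scalar_prod_def)
  have "A $$ (i,k) * B $$ (k,i) = (if k = i then 1 else 0)" if "i < n" "k < n" for i k
    using that Ad Bd Al[of i k] Bl[of k i] by (cases "k < i"; cases "k = i") auto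
  then have diag: "(\<Sum>k\<in>{0..<n}. A $$ (i,k) * B $$ (k,i)) = 1" if "i < n" for i
    using that by simp
  have "A $$ (i,k) * B $$ (k,j) = 0" if "i < n" "k < n" "j < i" for i j k
    using that Al[of i k] Bl[of k j] by (cases "k < i") auto
  then have below: "(\<Sum>k\<in>{0..<n}. A $$ (i,k) * B $$ (k,j)) = 0" if "i < n" "j < i" for i j
    using that by (intro sum.neutral) auto
  show ?thesis
    using Ac Bc entry diag below by (auto simp: UT_def)
qed

lemma UT_GL_mat_inv:
  assumes A: "(A :: 'a::{finite,field} mat) \<in> UT n"
  shows "A \<in> GL n" "mat_inv n A \<in> UT n"
proof -
  have Ac: "A \<in> carrier_mat n n" using A by (rule UT_carrier)
  have "diag_mat A = replicate n 1"
    using A by (auto simp: UT_def diag_mat_def intro!: nth_equalityI)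
  then have "det A = 1"
    using det_upper_triangular[OF _ Ac] A by (auto simp: UT_def upper_triangular_def)
  then obtain C where C: "C \<in> carrier_mat n n" and CA: "C * A = 1\<^sub>m n"
    using det_non_zero_imp_unit[OF Ac] by (auto simp: Units_def ring_mat_def)
  \<comment> \<open>left multiplication by \<open>A\<close> is injective on the finite set \<open>UT n\<close>, hence onto\<close>
  have "inj_on ((*) A) (UT n)"
  proof (rule inj_onI)
    fix X Y assume X: "X \<in> UT n" and Y: "Y \<in> UT n" and "A * X = A * Y"
    then have "(C * A) * X = (C * A) * Y"
      using Ac C by (simp add: assoc_mult_mat[of _ n n _ n _ n] UT_carrier)
    then show "X = Y" using CA X Y by (simp add: UT_carrier left_mult_one_mat[of _ n n])
  qed
  moreover have "(*) A ` UT n \<subseteq> UT n" using A UT_mult_closed by blast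
  ultimately have "(*) A ` UT n = UT n" using endo_inj_surj[OF finite_UT] by blast
  then obtain B where B: "B \<in> UT n" and AB: "A * B = 1\<^sub>m n"
    using one_UT[of n] by (metis imageE)
  show "A \<in> GL n" "mat_inv n A \<in> UT n"
    using GL_I[OF Ac _ AB] mat_inv_eqI[OF Ac _ AB] B UT_carrier[OF B] by auto
qed

section \<open>The involution \<open>\<psi> \<mapsto> \<psi> \<circ> \<dagger>\<close> of \<open>cf(UT\<^sub>n)\<close>\<close>

lemma cf_eq_0: "\<psi> \<in> cf n \<Longrightarrow> A \<notin> UT n \<Longrightarrow> \<psi> A = 0"
  by (simp add: cf_def)

lemma cf_conj: "\<psi> \<in> cf n \<Longrightarrow> g \<in> UT n \<Longrightarrow> h \<in> UT n \<Longrightarrow> \<psi> (h * g * mat_inv n h) = \<psi> g"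
  by (simp add: cf_def)

lemma cf_mult_commute:
  assumes \<psi>: "\<psi> \<in> cf n" and x: "(x :: 'a::{finite,field} mat) \<in> UT n" and y: "y \<in> UT n"
  shows "\<psi> (x * y) = \<psi> (y * x)"
proof -
  note y' = GL_mat_inv[OF UT_GL_mat_inv(1)[OF y]]
  have "y * (x * y) * mat_inv n y = y * x * (y * mat_inv n y)"
    using UT_carrier[OF x] UT_carrier[OF y] y' by (simp add: assoc_mult_mat[of _ n n _ n _ n])
  also have "\<dots> = y * x"
    using UT_carrier[OF x] UT_carrier[OF y] y' by (simp add: right_mult_one_mat[of _ n n])
  finally show ?thesis
    using cf_conj[OF \<psi> UT_mult_closed[OF x y] y] by simp
qed

lemma dual_eq: "\<psi> \<in> cf n \<Longrightarrow> A \<in> carrier_mat n n \<Longrightarrow> dual n \<psi> A = \<psi> (dagger n A)"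
  by (auto simp: dual_def UT_dagger_iff cf_eq_0)

lemma dual_cf:
  assumes \<psi>: "\<psi> \<in> (cf n :: ('a::{finite,field} mat \<Rightarrow> complex) set)"
  shows "dual n \<psi> \<in> cf n"
proof -
  have "dual n \<psi> (h * g * mat_inv n h) = dual n \<psi> g" if g: "g \<in> UT n" and h: "h \<in> UT n" for g h
  proof -
    let ?k = "dagger n (mat_inv n h)"
    have k: "?k \<in> UT n" using UT_dagger[OF UT_GL_mat_inv(2)[OF h]] .
    have "dual n \<psi> (h * g * mat_inv n h) = \<psi> (?k * dagger n g * mat_inv n ?k)"
      using dual_eq[OF \<psi>] dagger_conj[OF UT_GL_mat_inv(1)[OF h] UT_carrier[OF g]]
        UT_carrier[OF g] UT_carrier[OF h] GL_mat_inv[OF UT_GL_mat_inv(1)[OF h]] by simp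
    also have "\<dots> = dual n \<psi> g"
      using cf_conj[OF \<psi> UT_dagger[OF g] k] dual_eq[OF \<psi> UT_carrier[OF g]] by simp
    finally show ?thesis .
  qed
  then show ?thesis
    unfolding cf_def by (auto simp: dual_def)
qed

lemma dual_dual: "\<psi> \<in> cf n \<Longrightarrow> dual n (dual n \<psi>) = \<psi>"
  by (auto simp: dual_def UT_dagger UT_carrier cf_eq_0)

lemma bij_betw_dual: "bij_betw (dual n) (cf n :: ('a::{finite,field} mat \<Rightarrow> complex) set) (cf n)"
  by (rule bij_betw_byWitness[where f' = "dual n"]) (auto simp: dual_dual dual_cf)

section \<open>Compatibility with the product\<close>

lemma mu_dual2: "mu a b (dual2 a b \<Phi>) = dual (a + b) (mu b a (swapf \<Phi>))"
proof
  fix g :: "'a::{finite,field} mat"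
  show "mu a b (dual2 a b \<Phi>) g = dual (a + b) (mu b a (swapf \<Phi>)) g"
  proof (cases "g \<in> UT (a + b)")
    case True
    let ?T = "mat a a (\<lambda>(i,j). g $$ (i,j))" and ?B = "mat b b (\<lambda>(i,j). g $$ (a + i, a + j))"
    let ?d = "dagger (a + b) g"
    have "mat a a (\<lambda>(i,j). ?d $$ (b + i, b + j)) = dagger a ?T"
      by (rule eq_matI) (auto simp: algebra_simps mirror_def)
    moreover have "mat b b (\<lambda>(i,j). ?d $$ (i, j)) = dagger b ?B"
      by (rule eq_matI) (auto simp: algebra_simps mirror_def intro!: arg_cong[where f = "\<lambda>p. g $$ p"])
    moreover have "?T \<in> UT a" "?B \<in> UT b"
      using True by (auto simp: UT_def)
    ultimately show ?thesis
      using True UT_dagger[OF True] by (simp add: mu_def dual_def dual2_def swapf_def add.commute[of b a])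
  qed (simp add: mu_def dual_def)
qed

section \<open>Compatibility with induction to \<open>GL\<^sub>n\<close>\<close>

lemma transpose_diag_block_mat:
  "transpose_mat (diag_block_mat As) = diag_block_mat (map transpose_mat As)"
proof (induction As)
  case (Cons A As)
  let ?B = "diag_block_mat As"
  have "transpose_mat (diag_block_mat (A # As)) =
    transpose_mat (four_block_mat A (0\<^sub>m (dim_row A) (dim_col ?B)) (0\<^sub>m (dim_row ?B) (dim_col A)) ?B)"
    by (simp add: Let_def)
  also have "\<dots> = four_block_mat (transpose_mat A) (0\<^sub>m (dim_col A) (dim_row ?B))
      (0\<^sub>m (dim_col ?B) (dim_row A)) (transpose_mat ?B)"
    by (subst transpose_four_block_mat[of _ "dim_row A" "dim_col A" _ "dim_col ?B" _ "dim_row ?B"]) auto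
  also have "\<dots> = diag_block_mat (map transpose_mat (A # As))"
    by (simp add: Let_def Cons[symmetric])
  finally show ?case .
qed simp

lemma similar_mat_transpose:
  assumes "similar_mat (A :: 'a::comm_ring_1 mat) B"
  shows "similar_mat (transpose_mat A) (transpose_mat B)"
proof -
  obtain n P Q where c: "{A,B,P,Q} \<subseteq> carrier_mat n n"
    and PQ: "P * Q = 1\<^sub>m n" and QP: "Q * P = 1\<^sub>m n" and A: "A = P * B * Q"
    using similar_matD[OF assms] by blast
  have "transpose_mat A = transpose_mat Q * transpose_mat B * transpose_mat P"
    using c by (simp add: A transpose_mult[of _ n n _ n] assoc_mult_mat[of _ n n _ n _ n])
  moreover have "transpose_mat Q * transpose_mat P = 1\<^sub>m n" "transpose_mat P * transpose_mat Q = 1\<^sub>m n"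
    using c PQ QP by (metis insert_subset transpose_mult transpose_one)+
  ultimately show ?thesis
    using c by (intro similar_matI[where n = n]) auto
qed

lemma similar_mat_transpose_jordan_block:
  "similar_mat (transpose_mat (jordan_block m (a :: 'a::comm_ring_1))) (jordan_block m a)"
proof (rule similar_matI[where n = m and P = "exchange_mat m" and Q = "exchange_mat m"])
  show "transpose_mat (jordan_block m a) = exchange_mat m * jordan_block m a * exchange_mat m"
    by (subst exchange_mat_conj[of _ m]) (auto simp: mirror_def intro!: eq_matI)
qed (auto simp: exchange_mat_squared)

lemma similar_mat_transpose_jordan_matrix:
  "similar_mat (transpose_mat (jordan_matrix n_as)) (jordan_matrix (n_as :: (nat \<times> 'a::comm_ring_1) list))"
proof -
  let ?Ms = "map (\<lambda>(m,a). (transpose_mat (jordan_block m a), jordan_block m a)) n_as"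
  have sim: "similar_mat (diag_block_mat (map fst ?Ms)) (diag_block_mat (map snd ?Ms))"
    by (rule similar_diag_mat_block_mat) (auto simp: similar_mat_transpose_jordan_block)
  have fst: "map fst ?Ms = map transpose_mat (map (\<lambda>(m,a). jordan_block m a) n_as)"
    and snd: "map snd ?Ms = map (\<lambda>(m,a). jordan_block m a) n_as"
    by (induction n_as) auto
  show ?thesis
    using sim unfolding jordan_matrix_def transpose_diag_block_mat fst snd .
qed

lemma similar_mat_transpose_upper_triangular:
  assumes "(A :: 'a::field mat) \<in> carrier_mat n n" and "upper_triangular A"
  shows "similar_mat (transpose_mat A) A"
proof -
  obtain n_as where J: "similar_mat A (jordan_matrix n_as)"
    using triangular_to_jnf_vector[OF assms] unfolding jordan_nf_def by blast
  show ?thesis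
    using similar_mat_trans[OF similar_mat_transpose[OF J] similar_mat_transpose_jordan_matrix]
      similar_mat_sym[OF J] similar_mat_trans by blast
qed

lemma similar_mat_GL_conj:
  assumes "similar_mat A B" and "(A :: 'a::{finite,field} mat) \<in> carrier_mat n n"
  shows "\<exists>z\<in>GL n. A = z * B * mat_inv n z"
proof -
  obtain m P Q where c: "{A,B,P,Q} \<subseteq> carrier_mat m m"
    and PQ: "P * Q = 1\<^sub>m m" and A: "A = P * B * Q"
    using similar_matD[OF assms(1)] by blast
  have "m = n" using c assms(2) by auto
  then show ?thesis
    using c PQ A GL_I[of P n Q] mat_inv_eqI[of P n Q] by auto
qed

lemma UT_dagger_GL_conj:
  assumes u: "(u :: 'a::{finite,field} mat) \<in> UT n"
  shows "\<exists>z\<in>GL n. dagger n u = z * u * mat_inv n z"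
proof -
  have uc: "u \<in> carrier_mat n n" using UT_carrier[OF u] .
  have "similar_mat (dagger n u) (transpose_mat u)"
    using uc by (intro similar_matI[where n = n and P = "exchange_mat n" and Q = "exchange_mat n"])
      (auto simp: dagger_eq_exchange_transpose exchange_mat_squared)
  moreover have "similar_mat (transpose_mat u) u"
    using u by (intro similar_mat_transpose_upper_triangular[OF uc]) (auto simp: UT_def upper_triangular_def)
  ultimately show ?thesis
    by (intro similar_mat_GL_conj[OF _ dagger_carrier]) (rule similar_mat_trans)
qed

definition GL_class_sum :: "nat \<Rightarrow> ('a::{finite,field} mat \<Rightarrow> complex) \<Rightarrow> 'a mat \<Rightarrow> complex" where
  "GL_class_sum n \<psi> g = (\<Sum>y\<in>GL n. \<psi> (y * g * mat_inv n y))"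

lemma ind_eq_GL_class_sum:
  assumes "(g :: 'a::{finite,field} mat) \<in> GL n"
  shows "ind n \<psi> g = GL_class_sum n \<psi> g / of_nat (card (UT n :: 'a mat set))"
proof -
  have "(\<Sum>x\<in>GL n. \<psi> (mat_inv n x * g * x)) = GL_class_sum n \<psi> g"
    unfolding GL_class_sum_def
    by (rule sum.reindex_bij_witness[where i = "mat_inv n" and j = "mat_inv n"])
      (auto simp: GL_mat_inv_closed)
  then show ?thesis
    using assms by (simp add: ind_def)
qed

lemma GL_class_sum_conj:
  assumes z: "(z :: 'a::{finite,field} mat) \<in> GL n" and g: "g \<in> carrier_mat n n"
  shows "GL_class_sum n \<psi> (z * g * mat_inv n z) = GL_class_sum n \<psi> g"
  unfolding GL_class_sum_def
proof (rule sum.reindex_bij_witness[where j = "\<lambda>y. y * z" and i = "\<lambda>y. y * mat_inv n z"])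
  fix y :: "'a mat" assume y: "y \<in> GL n"
  note carrier = GL_carrier[OF y] GL_carrier[OF z] GL_mat_inv[OF y] GL_mat_inv[OF z] g
  show "y * z \<in> GL n" "y * mat_inv n z \<in> GL n"
    using GL_mult_closed(1) y z GL_mat_inv_closed by blast+
  show "y * z * mat_inv n z = y" "y * mat_inv n z * z = y"
    using carrier by (simp_all add: assoc_mult_mat[of _ n n _ n _ n] right_mult_one_mat[of _ n n])
  show "\<psi> (y * z * g * mat_inv n (y * z)) = \<psi> (y * (z * g * mat_inv n z) * mat_inv n y)"
    using carrier GL_mult_closed(2)[OF y z] by (simp add: assoc_mult_mat[of _ n n _ n _ n])
qed

lemma GL_class_sum_dual:
  assumes \<psi>: "\<psi> \<in> cf n" and g: "(g :: 'a::{finite,field} mat) \<in> carrier_mat n n"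
  shows "GL_class_sum n (dual n \<psi>) g = GL_class_sum n \<psi> (dagger n g)"
proof -
  have closed: "dagger n (mat_inv n y) \<in> GL n"
    and involutive: "dagger n (mat_inv n (dagger n (mat_inv n y))) = y" if "y \<in> GL n" for y :: "'a mat"
    using GL_dagger[OF GL_mat_inv_closed[OF that]] that by (simp_all add: GL_carrier)
  show ?thesis
    unfolding GL_class_sum_def
  proof (rule sum.reindex_bij_witness[where i = "\<lambda>y. dagger n (mat_inv n y)"
        and j = "\<lambda>y. dagger n (mat_inv n y)"])
    fix y :: "'a mat" assume y: "y \<in> GL n"
    show "\<psi> (dagger n (mat_inv n y) * dagger n g * mat_inv n (dagger n (mat_inv n y)))
      = dual n \<psi> (y * g * mat_inv n y)"
      using dagger_conj[OF y g] dual_eq[OF \<psi>] g GL_carrier[OF y] GL_mat_inv[OF y] by simp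
  qed (use closed involutive in auto)
qed

lemma GL_class_sum_eq_0:
  "\<psi> \<in> cf n \<Longrightarrow> \<forall>y\<in>GL n. y * g * mat_inv n y \<notin> UT n \<Longrightarrow> GL_class_sum n \<psi> g = 0"
  unfolding GL_class_sum_def by (simp add: cf_eq_0)

lemma GL_class_sum_dagger_of_conj_UT:
  assumes y: "(y :: 'a::{finite,field} mat) \<in> GL n" and g: "g \<in> carrier_mat n n"
    and u: "y * g * mat_inv n y \<in> UT n"
  shows "GL_class_sum n \<psi> (dagger n g) = GL_class_sum n \<psi> g"
proof -
  define u where "u = y * g * mat_inv n y"
  let ?h = "mat_inv n y"
  have h: "?h \<in> GL n" using GL_mat_inv_closed[OF y] .
  have uc: "u \<in> carrier_mat n n" using u UT_carrier u_def by blast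
  have "?h * u * mat_inv n ?h = (?h * y) * g * (?h * y)"
    using g GL_carrier[OF y] GL_mat_inv(1)[OF y] y by (simp add: u_def assoc_mult_mat[of _ n n _ n _ n])
  also have "\<dots> = g"
    using g GL_mat_inv[OF y] by (simp add: left_mult_one_mat[of _ n n] right_mult_one_mat[of _ n n])
  finally have g_eq: "g = ?h * u * mat_inv n ?h" ..
  obtain z where z: "z \<in> GL n" and zu: "dagger n u = z * u * mat_inv n z"
    using UT_dagger_GL_conj u u_def by blast
  have "GL_class_sum n \<psi> (dagger n g) = GL_class_sum n \<psi> (dagger n u)"
    using g_eq dagger_conj[OF h uc] GL_class_sum_conj[OF GL_dagger(1)[OF GL_mat_inv_closed[OF h]] dagger_carrier]
    by simp
  also have "\<dots> = GL_class_sum n \<psi> u"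
    using zu GL_class_sum_conj[OF z uc] by simp
  also have "\<dots> = GL_class_sum n \<psi> g"
    using g_eq GL_class_sum_conj[OF h uc] by simp
  finally show ?thesis .
qed

lemma GL_class_sum_dagger:
  assumes \<psi>: "\<psi> \<in> cf n" and g: "(g :: 'a::{finite,field} mat) \<in> carrier_mat n n"
  shows "GL_class_sum n \<psi> (dagger n g) = GL_class_sum n \<psi> g"
proof -
  consider (g_conj) y where "y \<in> GL n" "y * g * mat_inv n y \<in> UT n"
    | (dagger_g_conj) y where "y \<in> GL n" "y * dagger n g * mat_inv n y \<in> UT n"
    | (neither) "\<forall>y\<in>GL n. y * g * mat_inv n y \<notin> UT n"
        "\<forall>y\<in>GL n. y * dagger n g * mat_inv n y \<notin> UT n"
    by blast
  then show ?thesis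
  proof cases
    case g_conj
    then show ?thesis using GL_class_sum_dagger_of_conj_UT g by blast
  next
    case dagger_g_conj
    then show ?thesis using GL_class_sum_dagger_of_conj_UT[OF _ dagger_carrier] g by fastforce
  qed (simp add: GL_class_sum_eq_0[OF \<psi>])
qed

lemma ind_dual:
  assumes \<psi>: "\<psi> \<in> (cf n :: ('a::{finite,field} mat \<Rightarrow> complex) set)"
  shows "ind n (dual n \<psi>) = ind n \<psi>"
proof
  fix g :: "'a mat"
  show "ind n (dual n \<psi>) g = ind n \<psi> g"
  proof (cases "g \<in> GL n")
    case True
    then show ?thesis
      using GL_carrier[OF True]
      by (simp add: ind_eq_GL_class_sum GL_class_sum_dual[OF \<psi>] GL_class_sum_dagger[OF \<psi>])
  qed (simp add: ind_def)
qed

section \<open>Compatibility with the coproduct\<close>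

lemma cano_mono: "finite K \<Longrightarrow> x \<le> y \<Longrightarrow> cano K x \<le> cano K y"
  unfolding cano_def by (rule card_mono) auto

lemma cano_strict_mono:
  assumes "finite K" "x \<in> K" "x < y"
  shows "cano K x < cano K y"
  unfolding cano_def using assms by (intro psubset_card_mono) auto

lemma cano_less_card: "finite K \<Longrightarrow> x \<in> K \<Longrightarrow> cano K x < card K"
  unfolding cano_def by (rule psubset_card_mono) auto

lemma bij_betw_cano:
  assumes K: "finite K"
  shows "bij_betw (cano K) K {0..<card K}"
proof -
  have inj: "inj_on (cano K) K"
  proof (rule inj_onI)
    fix x y assume "x \<in> K" "y \<in> K" "cano K x = cano K y"
    then show "x = y"
      using cano_strict_mono[OF K, of x y] cano_strict_mono[OF K, of y x] by (cases x y rule: linorder_cases) auto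
  qed
  moreover have "cano K ` K \<subseteq> {0..<card K}"
    using cano_less_card[OF K] by auto
  moreover have "card (cano K ` K) = card {0..<card K}"
    using card_image[OF inj] by simp
  ultimately show ?thesis
    by (simp add: bij_betw_def card_subset_eq)
qed

definition cano_inv :: "nat set \<Rightarrow> nat \<Rightarrow> nat" where
  "cano_inv K = inv_into K (cano K)"

lemma cano_inv_mem: "finite K \<Longrightarrow> i < card K \<Longrightarrow> cano_inv K i \<in> K"
  using bij_betw_imp_surj_on[OF bij_betw_cano] by (auto simp: cano_inv_def intro: inv_into_into)

lemma cano_cano_inv: "finite K \<Longrightarrow> i < card K \<Longrightarrow> cano K (cano_inv K i) = i"
  using bij_betw_imp_surj_on[OF bij_betw_cano] by (auto simp: cano_inv_def intro: f_inv_into_f)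

lemma cano_inv_cano: "finite K \<Longrightarrow> x \<in> K \<Longrightarrow> cano_inv K (cano K x) = x"
  using bij_betw_cano by (simp add: cano_inv_def bij_betw_def)

lemma cano_inv_strict_mono:
  assumes "finite K" "j < card K" "i < j"
  shows "cano_inv K i < cano_inv K j"
proof (rule ccontr)
  assume "\<not> ?thesis"
  then have "cano K (cano_inv K j) \<le> cano K (cano_inv K i)"
    by (intro cano_mono[OF assms(1)]) simp
  then show False
    using cano_cano_inv[OF assms(1)] assms by simp
qed

lemma cano_inv_less:
  assumes "K \<subseteq> {0..<n}" "i < card K"
  shows "cano_inv K i < n"
  using cano_inv_mem[OF finite_subset[OF assms(1)] assms(2)] assms(1) by auto

lemma card_greater_eq_mirror_cano:
  assumes "finite K" "x \<in> K"
  shows "card {k \<in> K. x < k} = mirror (card K) (cano K x)"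
proof -
  let ?L = "{k \<in> K. k < x}" and ?R = "insert x {k \<in> K. x < k}"
  have "card K = card (?L \<union> ?R)"
    using assms(2) by (intro arg_cong[where f = card]) auto
  also have "\<dots> = card ?L + card ?R"
    using assms(1) by (intro card_Un_disjoint) auto
  also have "card ?R = Suc (card {k \<in> K. x < k})"
    using assms(1) by simp
  finally show ?thesis
    unfolding cano_def mirror_def by simp
qed

lemma cano_mirror:
  assumes K: "K \<subseteq> {0..<n}" and x: "x \<in> K"
  shows "cano (mirror n ` K) (mirror n x) = mirror (card K) (cano K x)"
proof -
  have "{k \<in> mirror n ` K. k < mirror n x} = mirror n ` {k \<in> K. x < k}"
    using K x by (auto simp: mirror_def)
  moreover have "inj_on (mirror n) {k \<in> K. x < k}"
    using K by (intro inj_on_subset[OF inj_on_mirror]) auto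
  ultimately have "cano (mirror n ` K) (mirror n x) = card {k \<in> K. x < k}"
    unfolding cano_def by (simp add: card_image)
  then show ?thesis
    using card_greater_eq_mirror_cano[OF finite_subset[OF K] x] by simp
qed

lemma cano_inv_mirror:
  assumes K: "K \<subseteq> {0..<n}" and i: "i < card K"
  shows "cano_inv (mirror n ` K) i = mirror n (cano_inv K (mirror (card K) i))"
proof -
  have fin: "finite K" using K finite_subset by blast
  let ?x = "cano_inv K (mirror (card K) i)"
  have "?x \<in> K" "cano K ?x = mirror (card K) i"
    using cano_inv_mem[OF fin] cano_cano_inv[OF fin] i by auto
  then have "cano (mirror n ` K) (mirror n ?x) = i"
    using cano_mirror[OF K] i by simp
  then show ?thesis
    using cano_inv_cano[of "mirror n ` K" "mirror n ?x"] fin \<open>?x \<in> K\<close> by auto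
qed

text \<open>The paper's \<open>w(I\<^sup>c)\<close>, the index set that \<open>\<dagger>\<close> puts in the place of \<open>I\<close>.\<close>

definition mirror_compl :: "nat \<Rightarrow> nat set \<Rightarrow> nat set" where
  "mirror_compl n I = mirror n ` ({0..<n} - I)"

lemma mirror_compl_subset: "mirror_compl n I \<subseteq> {0..<n}"
  by (auto simp: mirror_compl_def)

lemma mem_mirror_image_iff:
  assumes "K \<subseteq> {0..<n}" "r < n"
  shows "r \<in> mirror n ` K \<longleftrightarrow> mirror n r \<in> K"
proof
  show "mirror n r \<in> K \<Longrightarrow> r \<in> mirror n ` K"
    using assms(2) by (intro rev_image_eqI[of "mirror n r"]) auto
qed (use assms in auto)

lemma mem_mirror_compl_iff: "r < n \<Longrightarrow> r \<in> mirror_compl n I \<longleftrightarrow> mirror n r \<notin> I"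
  by (subst mirror_compl_def, subst mem_mirror_image_iff) auto

lemma card_mirror_compl: "I \<subseteq> {0..<n} \<Longrightarrow> card (mirror_compl n I) = n - card I"
  unfolding mirror_compl_def
  by (subst card_image[OF inj_on_subset[OF inj_on_mirror]]) (auto simp: card_Diff_subset finite_subset)

lemma compl_mirror_compl: "I \<subseteq> {0..<n} \<Longrightarrow> {0..<n} - mirror_compl n I = mirror n ` I"
  by (auto simp: mem_mirror_compl_iff mem_mirror_image_iff)

lemma mirror_compl_mirror_compl: "I \<subseteq> {0..<n} \<Longrightarrow> mirror_compl n (mirror_compl n I) = I"
  using mirror_compl_subset[of n "mirror_compl n I"]
  by (auto simp: mem_mirror_compl_iff compl_mirror_compl mem_mirror_image_iff)

definition block_mat :: "nat set \<Rightarrow> 'a mat \<Rightarrow> 'a mat" where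
  "block_mat K g = mat (card K) (card K) (\<lambda>(i,j). g $$ (cano_inv K i, cano_inv K j))"

lemma st_eq_block_mat: "st n I g = (block_mat I g, block_mat ({0..<n} - I) g)"
  by (simp add: st_def block_mat_def cano_inv_def Let_def)

lemma block_mat_UT:
  assumes K: "K \<subseteq> {0..<n}" and g: "g \<in> UT n"
  shows "block_mat K g \<in> UT (card K)"
  using g cano_inv_less[OF K] cano_inv_strict_mono[OF finite_subset[OF K]]
  by (auto simp: UT_def block_mat_def)

lemma block_mat_mirror_dagger:
  assumes K: "K \<subseteq> {0..<n}"
  shows "block_mat (mirror n ` K) (dagger n g) = dagger (card K) (block_mat K g)"
proof -
  have card: "card (mirror n ` K) = card K"
    using K by (intro card_image inj_on_subset[OF inj_on_mirror])
  show ?thesis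
  proof (rule eq_matI)
    fix i j assume "i < dim_row (dagger (card K) (block_mat K g))" "j < dim_col (dagger (card K) (block_mat K g))"
    then have ij: "i < card K" "j < card K" by auto
    moreover have "cano_inv K (mirror (card K) i) < n" "cano_inv K (mirror (card K) j) < n"
      using cano_inv_less[OF K] ij by auto
    ultimately show "block_mat (mirror n ` K) (dagger n g) $$ (i,j) = dagger (card K) (block_mat K g) $$ (i,j)"
      using card cano_inv_mirror[OF K] cano_inv_less[OF K]
      by (simp add: block_mat_def)
  qed (simp_all add: block_mat_def card)
qed

lemma st_dagger:
  assumes I: "I \<subseteq> {0..<n}"
  shows "st n (mirror_compl n I) (dagger n g)
    = (dagger (n - card I) (snd (st n I g)), dagger (card I) (fst (st n I g)))"
proof -
  have "card ({0..<n} - I) = n - card I"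
    using I by (simp add: card_Diff_subset finite_subset)
  then show ?thesis
    unfolding st_eq_block_mat compl_mirror_compl[OF I] unfolding mirror_compl_def
      block_mat_mirror_dagger[OF I] block_mat_mirror_dagger[OF Diff_subset] by simp
qed

lemma dagger_support:
  assumes g: "g \<in> carrier_mat n n"
    and supp: "\<And>i j. i < n \<Longrightarrow> j < n \<Longrightarrow> (g - 1\<^sub>m n) $$ (i,j) \<noteq> 0 \<Longrightarrow> P i j"
    and rs: "r < n" "s < n" and nz: "(dagger n g - 1\<^sub>m n) $$ (r,s) \<noteq> 0"
  shows "P (mirror n s) (mirror n r)"
proof (rule supp[OF mirror_less[OF rs(2)] mirror_less[OF rs(1)]])
  have "r = s \<longleftrightarrow> mirror n s = mirror n r"
    using rs by (metis mirror_mirror)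
  then show "(g - 1\<^sub>m n) $$ (mirror n s, mirror n r) \<noteq> 0"
    using nz g rs by simp
qed

lemma UL_dagger:
  assumes g: "g \<in> UL n I"
  shows "dagger n g \<in> UL n (mirror_compl n I)"
proof -
  have gu: "g \<in> UT n" and gc: "g \<in> carrier_mat n n"
    and supp: "\<And>i j. i < n \<Longrightarrow> j < n \<Longrightarrow> (g - 1\<^sub>m n) $$ (i,j) \<noteq> 0 \<Longrightarrow> (i \<in> I \<longleftrightarrow> j \<in> I)"
    using g by (auto simp: UL_def UT_def)
  have "(r \<in> mirror_compl n I \<and> s \<in> mirror_compl n I)
      \<or> (r \<notin> mirror_compl n I \<and> s \<notin> mirror_compl n I)"
    if rs: "r < n" "s < n" and nz: "(dagger n g - 1\<^sub>m n) $$ (r,s) \<noteq> 0" for r s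
    using dagger_support[where P = "\<lambda>i j. i \<in> I \<longleftrightarrow> j \<in> I", OF gc supp rs nz]
      mem_mirror_compl_iff[OF rs(1)] mem_mirror_compl_iff[OF rs(2)]
    by auto
  then show ?thesis
    using UT_dagger[OF gu] by (auto simp: UL_def)
qed

lemma UR_dagger:
  assumes g: "g \<in> UR n I"
  shows "dagger n g \<in> UR n (mirror_compl n I)"
proof -
  have gu: "g \<in> UT n" and gc: "g \<in> carrier_mat n n"
    and supp: "\<And>i j. i < n \<Longrightarrow> j < n \<Longrightarrow> (g - 1\<^sub>m n) $$ (i,j) \<noteq> 0 \<Longrightarrow> i \<in> I \<and> j \<notin> I"
    using g by (auto simp: UR_def UT_def)
  have "r \<in> mirror_compl n I \<and> s \<notin> mirror_compl n I"
    if rs: "r < n" "s < n" and nz: "(dagger n g - 1\<^sub>m n) $$ (r,s) \<noteq> 0" for r s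
    using dagger_support[where P = "\<lambda>i j. i \<in> I \<and> j \<notin> I", OF gc supp rs nz]
      mem_mirror_compl_iff[OF rs(1)] mem_mirror_compl_iff[OF rs(2)]
    by auto
  then show ?thesis
    using UT_dagger[OF gu] by (auto simp: UR_def)
qed

lemma bij_betw_dagger:
  assumes "A \<subseteq> carrier_mat n n" "B \<subseteq> carrier_mat n n" "dagger n ` A \<subseteq> B" "dagger n ` B \<subseteq> A"
  shows "bij_betw (dagger n) A B"
  using assms by (intro bij_betw_byWitness[where f' = "dagger n"]) auto

lemma DefRes_dual:
  assumes \<psi>: "\<psi> \<in> (cf n :: ('a::{finite,field} mat \<Rightarrow> complex) set)"
    and I: "I \<subseteq> {0..<n}" and g: "g \<in> UT n"
  shows "DefRes n I (dual n \<psi>) g = DefRes n (mirror_compl n I) \<psi> (dagger n g)"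
proof -
  have UR_carrier: "UR n K \<subseteq> carrier_mat n n" for K
    by (auto simp: UR_def UT_def)
  have bij: "bij_betw (dagger n) (UR n I :: 'a mat set) (UR n (mirror_compl n I))"
    using UR_dagger[of _ n I] UR_dagger[of _ n "mirror_compl n I"] mirror_compl_mirror_compl[OF I]
    by (intro bij_betw_dagger UR_carrier) auto
  have "(\<Sum>x\<in>UR n I. dual n \<psi> (g * x)) = (\<Sum>x\<in>UR n I. \<psi> (dagger n g * dagger n x))"
  proof (rule sum.cong[OF refl])
    fix x :: "'a mat" assume x: "x \<in> UR n I"
    then have xu: "x \<in> UT n" by (simp add: UR_def)
    have "dual n \<psi> (g * x) = \<psi> (dagger n x * dagger n g)"
      using UT_carrier[OF g] UT_carrier[OF xu] by (simp add: dual_eq[OF \<psi>] dagger_mult)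
    also have "\<dots> = \<psi> (dagger n g * dagger n x)"
      using cf_mult_commute[OF \<psi> UT_dagger[OF xu] UT_dagger[OF g]] .
    finally show "dual n \<psi> (g * x) = \<psi> (dagger n g * dagger n x)" .
  qed
  also have "\<dots> = (\<Sum>x\<in>UR n (mirror_compl n I). \<psi> (dagger n g * x))"
    by (rule sum.reindex_bij_betw[OF bij])
  finally show ?thesis
    unfolding DefRes_def bij_betw_same_card[OF bij] by simp
qed

lemma UL_fiber_dagger:
  assumes I: "I \<subseteq> {0..<n}" and g: "g \<in> UL n I" and st: "st n I g = (x, y)"
  shows "dagger n g \<in> UL n (mirror_compl n I)"
    and "st n (mirror_compl n I) (dagger n g) = (dagger (n - card I) y, dagger (card I) x)"
  using UL_dagger[OF g] st_dagger[OF I, of g] st by simp_all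

lemma bij_betw_dagger_UL_fiber:
  assumes I: "I \<subseteq> {0..<n}" and a: "card I = a"
    and x: "x \<in> carrier_mat a a" and y: "y \<in> carrier_mat (n - a) (n - a)"
  shows "bij_betw (dagger n) {g \<in> UL n I. st n I g = (x, y)}
    {h \<in> UL n (mirror_compl n I). st n (mirror_compl n I) h = (dagger (n - a) y, dagger a x)}"
proof (rule bij_betw_dagger)
  let ?J = "mirror_compl n I"
  have "a \<le> n" using I a card_mono[OF _ I] by auto
  have card_J: "card ?J = n - a"
    using I a by (simp add: card_mirror_compl)
  have "dagger n g \<in> UL n ?J" "st n ?J (dagger n g) = (dagger (n - a) y, dagger a x)"
    if g: "g \<in> UL n I" "st n I g = (x, y)" for g
    using UL_fiber_dagger[OF I g] a by simp_all
  then show "dagger n ` {g \<in> UL n I. st n I g = (x, y)}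
    \<subseteq> {h \<in> UL n ?J. st n ?J h = (dagger (n - a) y, dagger a x)}"
    by blast
  have "dagger n h \<in> UL n I" "st n I (dagger n h) = (x, y)"
    if h: "h \<in> UL n ?J" "st n ?J h = (dagger (n - a) y, dagger a x)" for h
    using UL_fiber_dagger[OF mirror_compl_subset h] mirror_compl_mirror_compl[OF I] x y
    by (simp_all add: card_J \<open>a \<le> n\<close>)
  then show "dagger n ` {h \<in> UL n ?J. st n ?J h = (dagger (n - a) y, dagger a x)}
    \<subseteq> {g \<in> UL n I. st n I g = (x, y)}"
    by blast
qed (auto simp: UL_def UT_def)

lemma st_UL_UT:
  assumes I: "I \<subseteq> {0..<n}" and g: "g \<in> UL n I"
  shows "fst (st n I g) \<in> UT (card I)" "snd (st n I g) \<in> UT (n - card I)"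
proof -
  have "g \<in> UT n" using g by (simp add: UL_def)
  moreover have "card ({0..<n} - I) = n - card I"
    using I by (simp add: card_Diff_subset finite_subset)
  ultimately show "fst (st n I g) \<in> UT (card I)" "snd (st n I g) \<in> UT (n - card I)"
    using block_mat_UT[OF I] block_mat_UT[of "{0..<n} - I" n g] by (auto simp: st_eq_block_mat)
qed

lemma bij_betw_mirror_compl:
  assumes "a \<le> n"
  shows "bij_betw (mirror_compl n)
    {I. I \<subseteq> {0..<n} \<and> card I = a} {I. I \<subseteq> {0..<n} \<and> card I = n - a}"
  using assms
  by (intro bij_betw_byWitness[where f' = "mirror_compl n"])
    (auto simp: mirror_compl_mirror_compl card_mirror_compl dest: mirror_compl_subset[THEN subsetD])

lemma coprod_dual:
  assumes \<psi>: "\<psi> \<in> (cf n :: ('a::{finite,field} mat \<Rightarrow> complex) set)" and a: "a \<le> n"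
  shows "coprod n a (dual n \<psi>) = swapf (dual2 (n - a) a (coprod n (n - a) \<psi>))"
proof (intro ext, clarify)
  fix x y :: "'a mat"
  let ?fiber = "\<lambda>I x y. {g \<in> UL n I. st n I g = (x, y)}"
  let ?subsets = "\<lambda>a. {I. I \<subseteq> {0..<n} \<and> card I = a}"
  show "coprod n a (dual n \<psi>) (x, y) = swapf (dual2 (n - a) a (coprod n (n - a) \<psi>)) (x, y)"
  proof (cases "x \<in> UT a \<and> y \<in> UT (n - a)")
    case True
    have "coprod n a (dual n \<psi>) (x, y)
        = (\<Sum>I\<in>?subsets a. \<Sum>g\<in>?fiber I x y. DefRes n I (dual n \<psi>) g)"
      by (simp add: coprod_def)
    also have "\<dots> = (\<Sum>I\<in>?subsets a. \<Sum>g\<in>?fiber I x y.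
        DefRes n (mirror_compl n I) \<psi> (dagger n g))"
      using DefRes_dual[OF \<psi>] by (intro sum.cong refl) (auto simp: UL_def)
    also have "\<dots> = (\<Sum>I\<in>?subsets a. \<Sum>h\<in>?fiber (mirror_compl n I) (dagger (n - a) y) (dagger a x).
        DefRes n (mirror_compl n I) \<psi> h)"
      using True by (intro sum.cong refl sum.reindex_bij_betw bij_betw_dagger_UL_fiber) (auto simp: UT_carrier)
    also have "\<dots> = (\<Sum>J\<in>?subsets (n - a). \<Sum>h\<in>?fiber J (dagger (n - a) y) (dagger a x).
        DefRes n J \<psi> h)"
      by (rule sum.reindex_bij_betw[OF bij_betw_mirror_compl[OF a]])
    also have "\<dots> = swapf (dual2 (n - a) a (coprod n (n - a) \<psi>)) (x, y)"
      using True by (simp add: swapf_def dual2_def coprod_def)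
    finally show ?thesis .
  next
    case False
    have "(\<Sum>g\<in>?fiber I x y. DefRes n I (dual n \<psi>) g) = 0" if I: "I \<in> ?subsets a" for I
    proof -
      have "x \<in> UT a \<and> y \<in> UT (n - a)" if "g \<in> UL n I" "st n I g = (x, y)" for g
        using st_UL_UT[of I n g] I that by auto
      then have "?fiber I x y = {}" using False by blast
      then show ?thesis by (simp only: sum.empty)
    qed
    then have "(\<Sum>I\<in>?subsets a. \<Sum>g\<in>?fiber I x y. DefRes n I (dual n \<psi>) g) = 0"
      by (intro sum.neutral) blast
    then show ?thesis
      using False by (auto simp: coprod_def swapf_def dual2_def)
  qed
qed

theorem theorem6p2:
  fixes dummy :: "'a::{finite,field} itself"
  shows "(\<forall>n. bij_betw (dual n) (cf n :: ('a mat \<Rightarrow> complex) set) (cf n))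
       \<and> (\<forall>a b. \<forall>\<Phi>\<in>(cf2 a b :: ('a mat \<times> 'a mat \<Rightarrow> complex) set).
            mu a b (dual2 a b \<Phi>) = dual (a + b) (mu b a (swapf \<Phi>)))
       \<and> (\<forall>n a. \<forall>\<psi>\<in>(cf n :: ('a mat \<Rightarrow> complex) set). a \<le> n \<longrightarrow>
            coprod n a (dual n \<psi>) = swapf (dual2 (n - a) a (coprod n (n - a) \<psi>)))
       \<and> (\<forall>n. \<forall>\<psi>\<in>(cf n :: ('a mat \<Rightarrow> complex) set). ind n (dual n \<psi>) = ind n \<psi>)"
  using bij_betw_dual mu_dual2 coprod_dual ind_dual by blast

end
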